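(* Let $P_1,\dots,P_n\subset\mathbb{R}^d$ be convex polytopes each containing the origin, let $\mu\in\mathbb{R}^d$, and let $\Delta=\Delta(\mathcal{P};\mu)$. Let $\sigma,\tau\in\Delta$ be faces with $\sigma\cup\tau\in\Delta$. Then for any line $\ell$ through $\mu$, the sets $P_\sigma\cap\ell$ and $P_\tau\cap\ell$ lie on the same side of $\mu$, i.e. they are contained in the same connected component of $\ell\setminus\{\mu\}$.
   Context: For $\sigma\subseteq[n]$ write $P_\sigma=\sum_{i\in\sigma}P_i$ (Minkowski sum), with $P_\emptyset=\{0\}$; the Minkowski complex $\Delta(\mathcal{P};\mu)$ is the simplicial complex on vertex set $[n]$ whose faces are the $\sigma\subseteq[n]$ with $\mu\notin P_\sigma$. *)

theory Defs
  imports "HOL-Analysis.Analysis"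
begin

definition msum :: "(nat \<Rightarrow> 'a::euclidean_space set) \<Rightarrow> nat set \<Rightarrow> 'a set" where
  "msum P \<sigma> = {(\<Sum>i\<in>\<sigma>. x i) | x. \<forall>i\<in>\<sigma>. x i \<in> P i}"

definition minkowski_complex :: "nat \<Rightarrow> (nat \<Rightarrow> 'a::euclidean_space set) \<Rightarrow> 'a \<Rightarrow> nat set set" where
  "minkowski_complex n P \<mu> = {\<sigma>. \<sigma> \<subseteq> {1..n} \<and> \<mu> \<notin> msum P \<sigma>}"

definition line_through :: "'a::euclidean_space \<Rightarrow> 'a \<Rightarrow> 'a set" where
  "line_through \<mu> v = {\<mu> + t *\<^sub>R v | t. True}"

end

theory Submission
  imports Defs
begin

text \<open>Since every \<open>P i\<close> contains the origin, \<open>P\<^sub>\<sigma>\<close> and \<open>P\<^sub>\<tau>\<close> both lie in the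
  Minkowski sum over \<open>\<sigma> \<union> \<tau>\<close>, which is convex and misses \<open>\<mu>\<close>. A convex set missing \<open>\<mu>\<close>
  meets a line through \<open>\<mu>\<close> in a segment avoiding \<open>\<mu>\<close>, hence inside one of the two open
  rays from \<open>\<mu>\<close>, and each ray is connected.\<close>

lemma msum_mono:
  assumes "A \<subseteq> B" "finite B" "\<And>i. i \<in> B - A \<Longrightarrow> 0 \<in> P i"
  shows "msum P A \<subseteq> msum P B"
proof
  fix y assume "y \<in> msum P A"
  then obtain x where y: "y = (\<Sum>i\<in>A. x i)" and x: "\<forall>i\<in>A. x i \<in> P i"
    unfolding msum_def by blast
  define z where "z = (\<lambda>i. if i \<in> A then x i else 0)"
  have "(\<Sum>i\<in>B. z i) = (\<Sum>i\<in>A. z i)"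
    using assms(1,2) by (intro sum.mono_neutral_right) (auto simp: z_def)
  also have "\<dots> = y" using y by (simp add: z_def)
  finally have "y = (\<Sum>i\<in>B. z i)" by simp
  moreover have "\<forall>i\<in>B. z i \<in> P i" using x assms(3) by (auto simp: z_def)
  ultimately show "y \<in> msum P B" unfolding msum_def by blast
qed

lemma convex_msum:
  assumes "\<And>i. i \<in> A \<Longrightarrow> convex (P i)"
  shows "convex (msum P A)"
  unfolding convex_def
proof (intro allI ballI impI)
  fix a b and u w :: real
  assume a: "a \<in> msum P A" and b: "b \<in> msum P A" and uw: "0 \<le> u" "0 \<le> w" "u + w = 1"
  obtain x where xa: "a = (\<Sum>i\<in>A. x i)" and x: "\<forall>i\<in>A. x i \<in> P i"
    using a unfolding msum_def by blast
  obtain y where yb: "b = (\<Sum>i\<in>A. y i)" and y: "\<forall>i\<in>A. y i \<in> P i"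
    using b unfolding msum_def by blast
  have "u *\<^sub>R a + w *\<^sub>R b = (\<Sum>i\<in>A. u *\<^sub>R x i + w *\<^sub>R y i)"
    by (simp add: xa yb scaleR_sum_right sum.distrib)
  moreover have "\<forall>i\<in>A. u *\<^sub>R x i + w *\<^sub>R y i \<in> P i"
    using x y assms uw by (auto simp: convex_def)
  ultimately show "u *\<^sub>R a + w *\<^sub>R b \<in> msum P A" unfolding msum_def by blast
qed

lemma line_through_eq_range: "line_through \<mu> v = range (\<lambda>t. \<mu> + t *\<^sub>R v)"
  by (auto simp: line_through_def)

lemma convex_line_inter_one_side:
  fixes Q :: "'a::euclidean_space set"
  assumes "convex Q" "\<mu> \<notin> Q"
  shows "Q \<inter> line_through \<mu> v \<subseteq> (\<lambda>t. \<mu> + t *\<^sub>R v) ` {0<..} \<or>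
         Q \<inter> line_through \<mu> v \<subseteq> (\<lambda>t. \<mu> + t *\<^sub>R v) ` {..<0}"
proof (rule ccontr)
  assume "\<not> ?thesis"
  then obtain s t where s: "\<mu> + s *\<^sub>R v \<in> Q" "\<not> s > 0" and t: "\<mu> + t *\<^sub>R v \<in> Q" "\<not> t < 0"
    unfolding line_through_eq_range by blast
  have "s \<noteq> 0" "t \<noteq> 0" using s t assms(2) by auto
  with s t have st: "s < 0" "0 < t" by auto
  define u where "u = t / (t - s)"
  have u: "0 \<le> u" "u \<le> 1" and "u * s + (1 - u) * t = 0"
    using st by (auto simp: u_def field_simps)
  then have "u *\<^sub>R (\<mu> + s *\<^sub>R v) + (1 - u) *\<^sub>R (\<mu> + t *\<^sub>R v) = \<mu>"
    by (simp add: algebra_simps flip: scaleR_add_left)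
  moreover have "u *\<^sub>R (\<mu> + s *\<^sub>R v) + (1 - u) *\<^sub>R (\<mu> + t *\<^sub>R v) \<in> Q"
    using assms(1) s t u by (auto simp: convex_def)
  ultimately show False using assms(2) by simp
qed

lemma ray_subset_component:
  fixes \<mu> v :: "'a::euclidean_space"
  assumes "connected S" "S \<noteq> {}" "0 \<notin> S" "v \<noteq> 0"
  shows "\<exists>C \<in> components (line_through \<mu> v - {\<mu>}). (\<lambda>t. \<mu> + t *\<^sub>R v) ` S \<subseteq> C"
proof -
  have sub: "(\<lambda>t. \<mu> + t *\<^sub>R v) ` S \<subseteq> line_through \<mu> v - {\<mu>}"
    unfolding line_through_eq_range using assms(3,4) by auto
  moreover have "line_through \<mu> v - {\<mu>} \<noteq> {}"
    using sub assms(2) by blast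
  moreover have "connected ((\<lambda>t. \<mu> + t *\<^sub>R v) ` S)"
    by (intro connected_continuous_image[OF _ assms(1)] continuous_intros)
  ultimately have "\<exists>C. C \<in> components (line_through \<mu> v - {\<mu>}) \<and> (\<lambda>t. \<mu> + t *\<^sub>R v) ` S \<subseteq> C"
    by (rule exists_component_superset)
  then show ?thesis by blast
qed

lemma convex_line_inter_subset_component:
  fixes Q :: "'a::euclidean_space set"
  assumes "convex Q" "\<mu> \<notin> Q" "v \<noteq> 0"
  shows "\<exists>C \<in> components (line_through \<mu> v - {\<mu>}). Q \<inter> line_through \<mu> v \<subseteq> C"
proof -
  have "(1::real) \<in> {0<..}" "(-1::real) \<in> {..<0}" by auto
  then obtain Cp Cm where
    Cp: "Cp \<in> components (line_through \<mu> v - {\<mu>})" "(\<lambda>t. \<mu> + t *\<^sub>R v) ` {0<..} \<subseteq> Cp" and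
    Cm: "Cm \<in> components (line_through \<mu> v - {\<mu>})" "(\<lambda>t. \<mu> + t *\<^sub>R v) ` {..<0} \<subseteq> Cm"
    using ray_subset_component[OF connected_Ioi _ _ assms(3)]
      ray_subset_component[OF connected_Iio _ _ assms(3)]
    by (metis empty_iff greaterThan_iff lessThan_iff order.irrefl)
  from convex_line_inter_one_side[OF assms(1,2), of v] show ?thesis
  proof
    assume "Q \<inter> line_through \<mu> v \<subseteq> (\<lambda>t. \<mu> + t *\<^sub>R v) ` {0<..}"
    with Cp show ?thesis by (meson subset_trans)
  next
    assume "Q \<inter> line_through \<mu> v \<subseteq> (\<lambda>t. \<mu> + t *\<^sub>R v) ` {..<0}"
    with Cm show ?thesis by (meson subset_trans)
  qed
qed

theorem lemma5:
  fixes P :: "nat \<Rightarrow> 'a::euclidean_space set" and n :: nat and \<mu> v :: 'a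
    and \<sigma> \<tau> :: "nat set"
  assumes polys: "\<And>i. i \<in> {1..n} \<Longrightarrow> polytope (P i)"
    and orig: "\<And>i. i \<in> {1..n} \<Longrightarrow> 0 \<in> P i"
    and sig: "\<sigma> \<in> minkowski_complex n P \<mu>"
    and tau: "\<tau> \<in> minkowski_complex n P \<mu>"
    and un: "\<sigma> \<union> \<tau> \<in> minkowski_complex n P \<mu>"
    and v: "v \<noteq> 0"
  shows "\<exists>C \<in> components (line_through \<mu> v - {\<mu>}).
           msum P \<sigma> \<inter> line_through \<mu> v \<subseteq> C \<and> msum P \<tau> \<inter> line_through \<mu> v \<subseteq> C"
proof -
  have sub: "\<sigma> \<union> \<tau> \<subseteq> {1..n}" and mu: "\<mu> \<notin> msum P (\<sigma> \<union> \<tau>)"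
    using un by (auto simp: minkowski_complex_def)
  have fin: "finite (\<sigma> \<union> \<tau>)" using sub finite_subset by blast
  have "convex (msum P (\<sigma> \<union> \<tau>))"
    using sub polys by (intro convex_msum) (meson subsetD polytope_imp_convex)
  then obtain C where C: "C \<in> components (line_through \<mu> v - {\<mu>})"
    and QC: "msum P (\<sigma> \<union> \<tau>) \<inter> line_through \<mu> v \<subseteq> C"
    using convex_line_inter_subset_component mu v by blast
  have "msum P \<sigma> \<subseteq> msum P (\<sigma> \<union> \<tau>)" "msum P \<tau> \<subseteq> msum P (\<sigma> \<union> \<tau>)"
    using sub orig fin by (intro msum_mono; auto)+
  with C QC show ?thesis by blast
qed

end
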